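(* Let $p>3$ be a prime, $n$ a positive integer, $d=\frac{p^n+3}{2}$ and $F(x)=x^d$ on $\mathrm{GF}(p^n)$, and let $c=-1$. If $p^n\equiv1\pmod4$ then ${}_c\Delta_F\le4$, and if $p^n\equiv3\pmod4$ then ${}_c\Delta_F\le3$.
   Context: For a function $F:\mathrm{GF}(p^n)\to\mathrm{GF}(p^n)$ and $a,b,c\in\mathrm{GF}(p^n)$, let ${}_c\Delta_F(a,b)=\#\{x\in\mathrm{GF}(p^n): F(x+a)-cF(x)=b\}$. The $c$-differential uniformity of $F$ is ${}_c\Delta_F=\max\{{}_c\Delta_F(a,b): a,b\in\mathrm{GF}(p^n),\ \text{and } a\neq 0 \text{ if } c=1\}$. *)

theory Defs
  imports Main "HOL-Computational_Algebra.Primes"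
begin

definition c_diff_count :: "('a::{finite,field} \<Rightarrow> 'a) \<Rightarrow> 'a \<Rightarrow> 'a \<Rightarrow> 'a \<Rightarrow> nat" where
  "c_diff_count F c a b = card {x. F (x + a) - c * F x = b}"

definition c_diff_uniformity :: "('a::{finite,field} \<Rightarrow> 'a) \<Rightarrow> 'a \<Rightarrow> nat" where
  "c_diff_uniformity F c = Max {c_diff_count F c a b | a b. c \<noteq> 1 \<or> a \<noteq> 0}"

end

theory Submission
  imports Defs "HOL-Library.Cardinality" "HOL-Number_Theory.Residues"
begin

(* Let q = p^n and let \<eta>(x) = x^((q-1)/2) be the quadratic character of GF(q). The exponent
   d = (q+3)/2 satisfies x^d = \<eta>(x) x^2. For a \<noteq> 0 the substitution x = a y turns
   F(x+a) + F(x) = b into (y+1)^d + y^d = b', and for a = 0 the equation is 2 x^d = b.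
   Once the signs \<eta>(y+1) and \<eta>(y) are fixed, (y+1)^d + y^d = b' becomes a quadratic or linear
   equation, with at most two solutions, which can only be solvable when \<eta>((b'-1)/2) and
   \<eta>((b'+1)/2) take prescribed values; these constraints are incompatible often enough to leave
   at most four solutions. If q = 3 (mod 4) then \<eta>(-1) = -1 separates the two roots y and -1-y
   of each quadratic, which lowers the bound to three. *)

lemma power_card_minus_one_eq_one:
  fixes x :: "'a::{finite,field}"
  assumes "x \<noteq> 0"
  shows "x ^ (CARD('a) - 1) = 1"
proof -
  let ?U = "UNIV - {0::'a}"
  have "bij_betw ((*) x) ?U ?U"
    by (rule bij_betw_byWitness[where f' = "(*) (inverse x)"]) (use assms in auto)
  then have "(\<Prod>y\<in>?U. x * y) = (\<Prod>y\<in>?U. y)"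
    using prod.reindex_bij_betw[of "(*) x" ?U ?U "\<lambda>y. y"] by simp
  moreover have "(\<Prod>y\<in>?U. x * y) = x ^ card ?U * (\<Prod>y\<in>?U. y)"
    by (simp add: prod.distrib)
  moreover have "(\<Prod>y\<in>?U. y) \<noteq> 0" and "card ?U = CARD('a) - 1"
    by (simp_all add: card_Diff_singleton)
  ultimately show ?thesis
    by simp
qed

lemma mult_add_one_eq_iff:
  fixes y z :: "'a::idom"
  shows "z * (z + 1) = y * (y + 1) \<longleftrightarrow> z = y \<or> z = - (y + 1)"
proof -
  have "z * (z + 1) - y * (y + 1) = (z - y) * (z + (y + 1))"
    by (simp add: algebra_simps)
  then have "z * (z + 1) = y * (y + 1) \<longleftrightarrow> (z - y) * (z + (y + 1)) = 0"
    by (simp only: eq_iff_diff_eq_0[of "z * (z + 1)"])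
  also have "\<dots> \<longleftrightarrow> z = y \<or> z = - (y + 1)"
    by (simp only: mult_eq_0_iff right_minus_eq eq_neg_iff_add_eq_0)
  finally show ?thesis .
qed

lemma card_mult_add_one_eq_le_2:
  fixes k :: "'a::idom"
  shows "card {y. y * (y + 1) = k} \<le> 2"
proof (cases "\<exists>r. r * (r + 1) = k")
  case True
  then obtain r where "r * (r + 1) = k" by blast
  then have "{y. y * (y + 1) = k} \<subseteq> {r, - (r + 1)}"
    using mult_add_one_eq_iff[of _ r] by auto
  then have "card {y. y * (y + 1) = k} \<le> card {r, - (r + 1)}"
    by (intro card_mono) simp_all
  also have "\<dots> \<le> 2"
    by (simp add: card_insert_le_m1)
  finally show ?thesis .
qed simp

lemma card_square_eq_le_2:
  fixes k :: "'a::idom"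
  shows "card {y. y\<^sup>2 = k} \<le> 2"
proof (cases "\<exists>r. r\<^sup>2 = k")
  case True
  then obtain r where "r\<^sup>2 = k" by blast
  then have "{y. y\<^sup>2 = k} \<subseteq> {r, - r}"
    by (auto simp: power2_eq_iff)
  then have "card {y. y\<^sup>2 = k} \<le> card {r, - r}"
    by (intro card_mono) simp_all
  also have "\<dots> \<le> 2"
    by (simp add: card_insert_le_m1)
  finally show ?thesis .
qed simp

lemma c_diff_count_power_scale:
  fixes a b c :: "'a::{finite,field}"
  assumes "a \<noteq> 0"
  shows "c_diff_count (\<lambda>x. x ^ k) c a b = c_diff_count (\<lambda>x. x ^ k) c 1 (b / a ^ k)"
proof -
  have "(a * y + a) ^ k - c * (a * y) ^ k = a ^ k * ((y + 1) ^ k - c * y ^ k)" for y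
    using power_mult_distrib[of a "y + 1" k] by (simp add: power_mult_distrib algebra_simps)
  then have "(*) a -` {x. (x + a) ^ k - c * x ^ k = b} = {y. (y + 1) ^ k - c * y ^ k = b / a ^ k}"
    using assms by (auto simp: nonzero_eq_divide_eq mult.commute)
  moreover have "bij ((*) a)"
    using assms by (intro bij_betw_byWitness[where f' = "\<lambda>x. x / a"]) auto
  then have "card ((*) a -` {x. (x + a) ^ k - c * x ^ k = b}) = card {x. (x + a) ^ k - c * x ^ k = b}"
    by (simp add: bij_def card_vimage_inj del: vimage_Collect_eq)
  ultimately show ?thesis
    by (simp add: c_diff_count_def)
qed

lemma c_diff_uniformity_le:
  fixes F :: "'a::{finite,field} \<Rightarrow> 'a"
  assumes "\<And>a b. c_diff_count F c a b \<le> B"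
  shows "c_diff_uniformity F c \<le> B"
proof -
  let ?M = "{c_diff_count F c a b | a b. c \<noteq> 1 \<or> a \<noteq> 0}"
  have "finite ?M"
    by (rule finite_subset[of _ "range (\<lambda>(a, b). c_diff_count F c a b)"]) auto
  moreover have "c_diff_count F c 1 0 \<in> ?M"
    by auto
  then have "?M \<noteq> {}"
    by blast
  ultimately show ?thesis
    using assms by (auto simp: c_diff_uniformity_def)
qed

definition quadratic_char :: "'a::{finite,field} \<Rightarrow> 'a" where
  "quadratic_char x = x ^ ((CARD('a) - 1) div 2)"

lemma quadratic_char_1 [simp]: "quadratic_char 1 = 1"
  by (simp add: quadratic_char_def)

lemma quadratic_char_mult: "quadratic_char (x * y) = quadratic_char x * quadratic_char y"
  by (simp add: quadratic_char_def power_mult_distrib)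

definition sign_class :: "'a::{finite,field} \<Rightarrow> 'a \<Rightarrow> 'a \<Rightarrow> 'a set" where
  "sign_class b s t = {y. (y + 1) ^ ((CARD('a) + 3) div 2) + y ^ ((CARD('a) + 3) div 2) = b
                          \<and> quadratic_char (y + 1) = s \<and> quadratic_char y = t}"

context
  assumes odd_card: "odd (card (UNIV :: 'a::{finite,field} set))"
begin

lemma two_neq_zero [simp]: "(2::'a) \<noteq> 0"
proof
  assume "(2::'a) = 0"
  then have "CHAR('a) dvd 2"
    by (metis of_nat_eq_0_iff_char_dvd of_nat_numeral)
  moreover have "odd CHAR('a)"
    using odd_card CHAR_dvd_CARD[where 'a='a] dvd_trans by blast
  ultimately have "CHAR('a) = 1"
    using dvd_imp_le[of "CHAR('a)" 2] by (auto simp: le_Suc_eq numeral_2_eq_2)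
  then show False
    using of_nat_CHAR[where 'a='a] by simp
qed

lemma one_neq_minus_one [simp]: "(1::'a) \<noteq> -1"
  by (metis add.right_inverse one_add_one two_neq_zero)

lemma minus_one_neq_one [simp]: "(-1::'a) \<noteq> 1"
  using one_neq_minus_one by metis

lemma quadratic_char_0 [simp]: "quadratic_char (0::'a) = 0"
proof -
  have "card {0, 1::'a} \<le> CARD('a)"
    by (rule card_mono) simp_all
  then have "(CARD('a) - 1) div 2 \<noteq> 0"
    using odd_card by (auto elim!: oddE)
  then show ?thesis
    by (simp add: quadratic_char_def)
qed

lemma quadratic_char_cases:
  fixes x :: 'a
  assumes "x \<noteq> 0"
  shows "quadratic_char x = 1 \<or> quadratic_char x = -1"
proof -
  have "(CARD('a) - 1) div 2 * 2 = CARD('a) - 1"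
    using odd_card by simp
  then have "(quadratic_char x)\<^sup>2 = 1"
    using power_card_minus_one_eq_one[OF assms]
    by (simp add: quadratic_char_def flip: power_mult)
  then show ?thesis
    by (simp add: power2_eq_1_iff)
qed

lemma quadratic_char_minus_one:
  "quadratic_char (-1::'a) = (if CARD('a) mod 4 = 1 then 1 else -1)"
proof -
  have "even ((CARD('a) - 1) div 2) \<longleftrightarrow> CARD('a) mod 4 = 1"
    using odd_card by (auto elim!: oddE) presburger+
  then show ?thesis
    by (simp add: quadratic_char_def)
qed

lemma power_half_card_plus_two:
  fixes x :: 'a
  shows "x ^ ((CARD('a) + 3) div 2) = quadratic_char x * x\<^sup>2"
proof -
  have "(CARD('a) + 3) div 2 = (CARD('a) - 1) div 2 + 2"
    using odd_card by (auto elim!: oddE)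
  then show ?thesis
    by (simp add: quadratic_char_def power_add power2_eq_square mult.commute)
qed

lemma quadratic_char_eq_0_iff [simp]: "quadratic_char x = 0 \<longleftrightarrow> x = (0::'a)"
  by (cases "x = 0") (use quadratic_char_cases[of x] in auto)

lemma quadratic_char_values:
  "quadratic_char x = 0 \<or> quadratic_char x = 1 \<or> quadratic_char x = (-1::'a)"
  using quadratic_char_cases[of x] by auto

lemma quadratic_char_minus_one_cases:
  "quadratic_char (-1::'a) = 1 \<or> quadratic_char (-1::'a) = -1"
  by (rule quadratic_char_cases) simp

lemma card_square_eq_with_char_le:
  fixes k s :: 'a
  assumes "s \<noteq> 0"
  shows "card {x. x\<^sup>2 = k \<and> quadratic_char x = s} \<le> (if quadratic_char (-1::'a) = 1 then 2 else 1)"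
proof (cases "quadratic_char (-1::'a) = 1")
  case True
  have "card {x. x\<^sup>2 = k \<and> quadratic_char x = s} \<le> card {x. x\<^sup>2 = k}"
    by (intro card_mono) auto
  with True card_square_eq_le_2[of k] show ?thesis
    by simp
next
  case False
  have "z = x" if "x\<^sup>2 = k" "quadratic_char x = s" "z\<^sup>2 = k" "quadratic_char z = s" for x z
  proof (rule ccontr)
    assume "z \<noteq> x"
    with that have "z = - x"
      using power2_eq_iff[of z x] by auto
    then have "s = - s"
      using that False quadratic_char_minus_one_cases quadratic_char_mult[of "-1" x] by simp
    with assms show False
      by simp
  qed
  with False show ?thesis
    by (auto simp: card_le_Suc0_iff_eq)
qed

lemma card_power_half_card_plus_two_eq_le:
  fixes e :: 'a
  shows "card {x. x ^ ((CARD('a) + 3) div 2) = e} \<le> (if quadratic_char (-1::'a) = 1 then 4 else 2)"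
proof (cases "e = 0")
  case True
  then have "{x. x ^ ((CARD('a) + 3) div 2) = e} = {0}"
    by auto
  then show ?thesis
    by simp
next
  case False
  let ?P = "{x. x\<^sup>2 = e \<and> quadratic_char x = 1}" and ?N = "{x. x\<^sup>2 = - e \<and> quadratic_char x = -1}"
  have "{x. x ^ ((CARD('a) + 3) div 2) = e} \<subseteq> ?P \<union> ?N"
  proof
    fix x assume "x \<in> {x. x ^ ((CARD('a) + 3) div 2) = e}"
    then have "quadratic_char x * x\<^sup>2 = e"
      by (simp add: power_half_card_plus_two)
    moreover have "x \<noteq> 0"
      using calculation False by auto
    ultimately show "x \<in> ?P \<union> ?N"
      using quadratic_char_cases[of x] by auto
  qed
  then have "card {x. x ^ ((CARD('a) + 3) div 2) = e} \<le> card ?P + card ?N"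
    by (meson card_Un_le card_mono finite order_trans)
  with card_square_eq_with_char_le[of 1 e] card_square_eq_with_char_le[of "-1" "- e"] show ?thesis
    by (simp split: if_splits)
qed

lemma sign_class_iff:
  fixes y b s t :: 'a
  shows "y \<in> sign_class b s t \<longleftrightarrow>
     s * (y + 1)\<^sup>2 + t * y\<^sup>2 = b \<and> quadratic_char (y + 1) = s \<and> quadratic_char y = t"
  by (auto simp: sign_class_def power_half_card_plus_two)

lemma card_sign_class_same:
  fixes b s :: 'a
  assumes "s = 1 \<or> s = -1"
  shows "card (sign_class b s s) \<le>
    (if quadratic_char ((s * b - 1) / 2) = 1 then if quadratic_char (-1::'a) = 1 then 2 else 1 else 0)"
proof -
  have root: "y * (y + 1) = (s * b - 1) / 2" if "y \<in> sign_class b s s" for y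
  proof -
    have "s * (s * ((y + 1)\<^sup>2 + y\<^sup>2)) = s * b"
      using that by (simp add: sign_class_iff algebra_simps)
    then have "2 * (y * (y + 1)) = s * b - 1"
      using assms by (auto simp: algebra_simps power2_eq_square)
    then show ?thesis
      by (simp add: field_simps)
  qed
  show ?thesis
  proof (cases "sign_class b s s = {}")
    case False
    then obtain y where y: "y \<in> sign_class b s s"
      by blast
    have "quadratic_char ((s * b - 1) / 2) = quadratic_char y * quadratic_char (y + 1)"
      by (simp add: quadratic_char_mult flip: root[OF y])
    then have "quadratic_char ((s * b - 1) / 2) = 1"
      using y assms by (auto simp: sign_class_iff)
    moreover have "card (sign_class b s s) \<le> card {y. y * (y + 1) = (s * b - 1) / 2}"
      by (intro card_mono) (auto dest: root(1))
    moreover have "card (sign_class b s s) \<le> 1" if minus_one: "quadratic_char (-1::'a) \<noteq> 1"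
    proof -
      have "z = y" if "y \<in> sign_class b s s" "z \<in> sign_class b s s" for y z
      proof (rule ccontr)
        assume "z \<noteq> y"
        then have "z = -1 * (y + 1)"
          using mult_add_one_eq_iff[of z y] root[OF that(1)] root[OF that(2)] by simp
        then have "quadratic_char z = quadratic_char (-1) * quadratic_char (y + 1)"
          by (simp only: quadratic_char_mult)
        then have "s = - s"
          using that minus_one quadratic_char_minus_one_cases by (auto simp: sign_class_iff)
        with assms show False
          by auto
      qed
      then show ?thesis
        by (auto simp: card_le_Suc0_iff_eq)
    qed
    ultimately show ?thesis
      using card_mult_add_one_eq_le_2[of "(s * b - 1) / 2"] by auto
  qed simp
qed

lemma card_sign_class_opposite:
  fixes b s :: 'a
  assumes "s = 1 \<or> s = -1"
  shows "card (sign_class b s (- s)) \<le>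
    (if quadratic_char ((s * b - 1) / 2) = - s \<and> quadratic_char ((s * b + 1) / 2) = s then 1 else 0)"
proof -
  have root: "(s * b - 1) / 2 = y" "(s * b + 1) / 2 = y + 1" if "y \<in> sign_class b s (- s)" for y
  proof -
    have "s * (s * ((y + 1)\<^sup>2 - y\<^sup>2)) = s * b"
      using that by (simp add: sign_class_iff algebra_simps)
    then have "2 * y = s * b - 1"
      using assms by (auto simp: algebra_simps power2_eq_square)
    then show "(s * b - 1) / 2 = y" "(s * b + 1) / 2 = y + 1"
      by (simp_all add: field_simps)
  qed
  show ?thesis
  proof (cases "sign_class b s (- s) = {}")
    case False
    then obtain y where y: "y \<in> sign_class b s (- s)"
      by blast
    have "quadratic_char ((s * b - 1) / 2) = - s \<and> quadratic_char ((s * b + 1) / 2) = s"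
      using y by (simp only: root[OF y] sign_class_iff)
    moreover have "card (sign_class b s (- s)) \<le> card {(s * b - 1) / 2}"
      by (intro card_mono) (auto dest: root(1))
    ultimately show ?thesis
      by simp
  qed simp
qed

lemma card_shifted_power_sum_at_0_or_minus_1_le:
  fixes b :: 'a
  shows "card ({y. (y + 1) ^ ((CARD('a) + 3) div 2) + y ^ ((CARD('a) + 3) div 2) = b} \<inter> {0, -1})
    \<le> (if b = 1 \<or> b = -1 then if quadratic_char (-1::'a) = 1 then 2 else 1 else 0)"
proof -
  define S where "S = {y. (y + 1) ^ ((CARD('a) + 3) div 2) + y ^ ((CARD('a) + 3) div 2) = b}"
  have zero: "0 \<in> S \<longleftrightarrow> 1 = b"
    by (simp add: S_def power_half_card_plus_two)
  have minus_one: "-1 \<in> S \<longleftrightarrow> quadratic_char (-1) = b"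
    by (simp add: S_def power_half_card_plus_two)
  have "card (S \<inter> {0, -1}) \<le> card {0, -1::'a}"
    by (intro card_mono) auto
  also have "\<dots> \<le> 2"
    by (simp add: card_insert_le_m1)
  finally have two: "card (S \<inter> {0, -1}) \<le> 2" .
  have one: "card (S \<inter> {0, -1}) \<le> 1" if "quadratic_char (-1::'a) \<noteq> 1"
  proof -
    have "\<not> (0 \<in> S \<and> -1 \<in> S)"
      using zero minus_one that quadratic_char_minus_one_cases by auto
    then show ?thesis
      by (auto simp: card_le_Suc0_iff_eq)
  qed
  have "S \<inter> {0, -1} = {}" if "b \<noteq> 1" "b \<noteq> -1"
    using zero minus_one that quadratic_char_minus_one_cases by auto
  with one two have "card (S \<inter> {0, -1})
    \<le> (if b = 1 \<or> b = -1 then if quadratic_char (-1::'a) = 1 then 2 else 1 else 0)"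
    by auto
  then show ?thesis
    by (simp only: S_def)
qed

lemma card_shifted_power_sum_le_sum_sign_classes:
  fixes b :: 'a
  defines "S \<equiv> {y. (y + 1) ^ ((CARD('a) + 3) div 2) + y ^ ((CARD('a) + 3) div 2) = b}"
  shows "card S \<le> card (S \<inter> {0, -1}) + card (sign_class b 1 1) + card (sign_class b (-1) (-1))
    + card (sign_class b 1 (-1)) + card (sign_class b (-1) 1)"
proof -
  have "S \<subseteq> S \<inter> {0, -1} \<union> sign_class b 1 1 \<union> sign_class b (-1) (-1)
      \<union> sign_class b 1 (-1) \<union> sign_class b (-1) 1"
  proof
    fix y assume y: "y \<in> S"
    show "y \<in> S \<inter> {0, -1} \<union> sign_class b 1 1 \<union> sign_class b (-1) (-1)
      \<union> sign_class b 1 (-1) \<union> sign_class b (-1) 1"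
    proof (cases "y = 0 \<or> y = -1")
      case False
      then have "y \<noteq> 0" "y + 1 \<noteq> 0"
        by (auto simp: eq_neg_iff_add_eq_0)
      moreover have "y \<in> sign_class b (quadratic_char (y + 1)) (quadratic_char y)"
        using y by (simp add: S_def sign_class_def)
      ultimately show ?thesis
        using quadratic_char_cases[of y] quadratic_char_cases[of "y + 1"] by auto
    qed (use y in blast)
  qed
  then have "card S \<le> card (S \<inter> {0, -1} \<union> sign_class b 1 1 \<union> sign_class b (-1) (-1)
      \<union> sign_class b 1 (-1) \<union> sign_class b (-1) 1)"
    by (rule card_mono[OF finite])
  also have "\<dots> \<le> card (S \<inter> {0, -1}) + card (sign_class b 1 1) + card (sign_class b (-1) (-1))
      + card (sign_class b 1 (-1)) + card (sign_class b (-1) 1)"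
    by (intro order_trans[OF card_Un_le] add_right_mono order_refl)
  finally show ?thesis .
qed

lemma card_shifted_power_sum_le:
  fixes b :: 'a
  shows "card {y. (y + 1) ^ ((CARD('a) + 3) div 2) + y ^ ((CARD('a) + 3) div 2) = b}
    \<le> (if quadratic_char (-1::'a) = 1 then 4 else 3)"
proof -
  define S where "S = {y. (y + 1) ^ ((CARD('a) + 3) div 2) + y ^ ((CARD('a) + 3) div 2) = b}"
  define u v \<epsilon> where "u = quadratic_char ((b - 1) / 2)" and "v = quadratic_char ((b + 1) / 2)"
    and "\<epsilon> = quadratic_char (-1::'a)"
  have "(-1 * b - 1) / 2 = -1 * ((b + 1) / 2)" and "(-1 * b + 1) / 2 = -1 * ((b - 1) / 2)"
    by (simp_all add: field_simps)
  then have minus_b: "quadratic_char ((-1 * b - 1) / 2) = \<epsilon> * v"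
      "quadratic_char ((-1 * b + 1) / 2) = \<epsilon> * u"
    by (simp_all only: quadratic_char_mult u_def v_def \<epsilon>_def)
  have "u = 0 \<longleftrightarrow> b = 1" and "v = 0 \<longleftrightarrow> b = -1"
    by (simp_all add: u_def v_def add_eq_0_iff2)
  then have "card (S \<inter> {0, -1}) \<le> (if u = 0 \<or> v = 0 then if \<epsilon> = 1 then 2 else 1 else 0)"
    using card_shifted_power_sum_at_0_or_minus_1_le[of b] by (simp only: S_def \<epsilon>_def)
  moreover have "card (sign_class b 1 1) \<le> (if u = 1 then if \<epsilon> = 1 then 2 else 1 else 0)"
    using card_sign_class_same[of 1 b] by (simp only: simp_thms mult_1 u_def \<epsilon>_def)
  moreover have "card (sign_class b 1 (-1)) \<le> (if u = -1 \<and> v = 1 then 1 else 0)"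
    using card_sign_class_opposite[of 1 b] by (simp only: simp_thms mult_1 u_def v_def)
  moreover have "card (sign_class b (-1) (-1))
      \<le> (if \<epsilon> * v = 1 then if \<epsilon> = 1 then 2 else 1 else 0)"
    using card_sign_class_same[of "-1" b] by (simp only: simp_thms minus_b \<epsilon>_def)
  moreover have "card (sign_class b (-1) 1)
      \<le> (if \<epsilon> * v = 1 \<and> \<epsilon> * u = -1 then 1 else 0)"
    using card_sign_class_opposite[of "-1" b] by (simp only: simp_thms minus_minus minus_b)
  moreover have "u = 0 \<or> u = 1 \<or> u = -1" and "v = 0 \<or> v = 1 \<or> v = -1"
    and "\<epsilon> = 1 \<or> \<epsilon> = -1"
    unfolding u_def v_def \<epsilon>_def by (rule quadratic_char_values quadratic_char_minus_one_cases)+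
  \<comment> \<open>Each class is nonempty only for particular values of \<open>u\<close>, \<open>v\<close>, \<open>\<epsilon>\<close>; among the
    18 value combinations, the classes allowed simultaneously hold at most 4 solutions,
    or 3 if \<open>\<epsilon> = -1\<close>.\<close>
  ultimately show ?thesis
    using card_shifted_power_sum_le_sum_sign_classes[of b]
    unfolding S_def [symmetric] \<epsilon>_def [symmetric] by (elim disjE) simp_all
qed

lemma c_diff_count_half_card_plus_two_le:
  fixes a b :: 'a
  shows "c_diff_count (\<lambda>x. x ^ ((CARD('a) + 3) div 2)) (-1) a b
    \<le> (if quadratic_char (-1::'a) = 1 then 4 else 3)"
proof (cases "a = 0")
  case True
  then have "c_diff_count (\<lambda>x. x ^ ((CARD('a) + 3) div 2)) (-1) a b
      = card {x. x ^ ((CARD('a) + 3) div 2) = b / 2}"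
    by (simp add: c_diff_count_def field_simps flip: mult_2)
  with card_power_half_card_plus_two_eq_le[of "b / 2"] show ?thesis
    by (simp split: if_splits)
next
  case False
  then have "c_diff_count (\<lambda>x. x ^ ((CARD('a) + 3) div 2)) (-1) a b
      = card {y. (y + 1) ^ ((CARD('a) + 3) div 2) + y ^ ((CARD('a) + 3) div 2)
                 = b / a ^ ((CARD('a) + 3) div 2)}"
    unfolding c_diff_count_power_scale[OF False] by (simp add: c_diff_count_def)
  with card_shifted_power_sum_le show ?thesis
    by (simp split: if_splits)
qed

end

theorem theorem7:
  fixes p n :: nat and F :: "'a::{finite,field} \<Rightarrow> 'a"
  defines "F \<equiv> (\<lambda>x. x ^ ((p ^ n + 3) div 2))"
  assumes "prime p" and "p > 3" and "n > 0"
    and "card (UNIV :: 'a set) = p ^ n"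
  shows "(p ^ n mod 4 = 1 \<longrightarrow>
            c_diff_uniformity F (-1) \<le> 4) \<and>
         (p ^ n mod 4 = 3 \<longrightarrow>
            c_diff_uniformity F (-1) \<le> 3)"
proof -
  have "odd p"
    using prime_odd_nat[OF assms(2)] assms(3) by simp
  then have odd_card: "odd CARD('a)"
    using assms(5) by simp
  have "c_diff_uniformity F (-1) \<le> (if quadratic_char (-1::'a) = 1 then 4 else 3)"
    unfolding F_def assms(5) [symmetric]
    by (rule c_diff_uniformity_le) (rule c_diff_count_half_card_plus_two_le[OF odd_card])
  then show ?thesis
    using quadratic_char_minus_one[OF odd_card] one_neq_minus_one[OF odd_card] assms(5) by auto
qed

end
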